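(* Consider the open chain with sites $1,\dots,N$ and distance $|i-j|$. Let $R_{\max}$ be a positive integer and, for each subset $X\subseteq\{1,\dots,N\}$ with $\mathrm{diam}(X)\le R_{\max}$, let $h_X$ be an operator supported in $X$ (possibly zero, not necessarily Hermitian) such that $h_X|W\rangle=0$ and $h_X|\overline 0\rangle=0$. If for some $p\in\{0,\dots,N\}$ with $p\le N/R_{\max}$ one has $\left(\sum_{X:\mathrm{diam}(X)\le R_{\max}}h_X\right)|W^p\rangle=E'_p|W^p\rangle$ for some $E'_p\in\mathbb{C}$, then $E'_p=0$.
   Context: System of $N$ qubits on sites $1,\dots,N$ with local basis $|0\rangle,|1\rangle$; $s_i^\dagger$ acts on site $i$ as $s^\dagger|0\rangle=|1\rangle$, $s^\dagger|1\rangle=0$; $|\overline 0\rangle=|0\rangle^{\otimes N}$. For a set $X$ of sites, $\mathrm{diam}(X)=1+\max_{i,j\in X}|i-j|$. An operator is supported in $X$ if it acts as the identity on all sites outside $X$. $S^\dagger=\sum_i s_i^\dagger$; for $p=0,\dots,N$, $|W^p\rangle$ is the normalized equal-weight superposition of all basis states with exactly $p$ sites in state $|1\rangle$ (equivalently the normalization of $(S^\dagger)^p|\overline 0\rangle$), and $|W\rangle=|W^1\rangle$. *)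

theory Defs
  imports Complex_Main
begin

text \<open>Computational basis of N qubits on sites 1..N: a basis state is identified with the
set of sites in state |1>, a subset of {1..N}. States are complex functions on such sets,
operators are matrices indexed by (output basis state, input basis state).\<close>

type_synonym state = "nat set \<Rightarrow> complex"
type_synonym oper = "nat set \<Rightarrow> nat set \<Rightarrow> complex"

definition sites :: "nat \<Rightarrow> nat set" where
  "sites N = {1..N}"

definition app :: "nat \<Rightarrow> oper \<Rightarrow> state \<Rightarrow> state" where
  "app N M v = (\<lambda>b. \<Sum>a\<in>Pow (sites N). M b a * v a)"

definition state_eq :: "nat \<Rightarrow> state \<Rightarrow> state \<Rightarrow> bool" where
  "state_eq N v w \<longleftrightarrow> (\<forall>b\<in>Pow (sites N). v b = w b)"

definition zero_state :: "state" where
  "zero_state = (\<lambda>a. if a = {} then 1 else 0)"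

definition Wp :: "nat \<Rightarrow> nat \<Rightarrow> state" where
  "Wp N p = (\<lambda>a. if a \<subseteq> sites N \<and> card a = p
                  then complex_of_real (1 / sqrt (real (N choose p))) else 0)"

text \<open>M is supported in X: M = A \<otimes> Id on the complement of X.\<close>
definition supported_in :: "nat \<Rightarrow> nat set \<Rightarrow> oper \<Rightarrow> bool" where
  "supported_in N X M \<longleftrightarrow> (\<exists>A :: oper. \<forall>a\<in>Pow (sites N). \<forall>b\<in>Pow (sites N).
      M b a = (if b - X = a - X then A (b \<inter> X) (a \<inter> X) else 0))"

definition diam :: "nat set \<Rightarrow> nat" where
  "diam X = 1 + Max {nat \<bar>int i - int j\<bar> | i j. i \<in> X \<and> j \<in> X}"

definition regions :: "nat \<Rightarrow> nat \<Rightarrow> nat set set" where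
  "regions N R = {X. X \<subseteq> sites N \<and> X \<noteq> {} \<and> diam X \<le> R}"

end

theory Submission
  imports Defs
begin

text \<open>Choose a basis state \<open>B\<close> whose \<open>p\<close> excited sites are spaced \<open>R\<close> apart, which is
possible because \<open>p R \<le> N\<close>. A region of diameter at most \<open>R\<close> then contains at most one site
of \<open>B\<close>. Since \<open>h\<^sub>X\<close> acts as the identity outside \<open>X\<close>, the \<open>B\<close>-amplitude of
\<open>h\<^sub>X |W\<^sup>p\<rangle>\<close> is a multiple of an amplitude of \<open>h\<^sub>X |0\<rangle>\<close> (if \<open>X\<close> misses \<open>B\<close>) or of
\<open>h\<^sub>X |W\<rangle>\<close> (if \<open>X\<close> meets \<open>B\<close> in one site), so it vanishes. Hence the \<open>B\<close>-amplitude of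
\<open>H |W\<^sup>p\<rangle>\<close> is \<open>0\<close>, whereas that of \<open>E |W\<^sup>p\<rangle>\<close> is \<open>E\<close> times a nonzero number.\<close>

definition local_matrix :: "nat \<Rightarrow> nat set \<Rightarrow> oper \<Rightarrow> oper \<Rightarrow> bool" where
  "local_matrix N X M A \<longleftrightarrow> (\<forall>a\<in>Pow (sites N). \<forall>b\<in>Pow (sites N).
      M b a = (if b - X = a - X then A (b \<inter> X) (a \<inter> X) else 0))"

lemma supported_in_iff_local_matrix: "supported_in N X M \<longleftrightarrow> (\<exists>A. local_matrix N X M A)"
  by (simp add: supported_in_def local_matrix_def)

lemma finite_sites: "finite (sites N)"
  by (simp add: sites_def)

lemma app_sum_oper:
  assumes "finite I"
  shows "app N (\<lambda>b a. \<Sum>X\<in>I. h X b a) v b = (\<Sum>X\<in>I. app N (h X) v b)"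
  unfolding app_def by (simp add: sum_distrib_right sum.swap[of _ I])

lemma app_supported:
  assumes X: "X \<subseteq> sites N" and b: "b \<subseteq> sites N"
    and A: "local_matrix N X M A"
  shows "app N M v b = (\<Sum>S\<in>Pow X. A (b \<inter> X) S * v (S \<union> (b - X)))"
proof -
  have recombine: "a \<inter> X \<union> (b - X) = a" if "a - X = b - X" for a
    using that by blast
  have "app N M v b = (\<Sum>a\<in>Pow (sites N). if a - X = b - X then A (b \<inter> X) (a \<inter> X) * v a else 0)"
    unfolding app_def using A b by (intro sum.cong) (auto simp: local_matrix_def)
  also have "\<dots> = (\<Sum>a\<in>{a \<in> Pow (sites N). a - X = b - X}. A (b \<inter> X) (a \<inter> X) * v a)"
    by (simp add: sum.inter_filter[symmetric] finite_sites)
  also have "\<dots> = (\<Sum>S\<in>Pow X. A (b \<inter> X) S * v (S \<union> (b - X)))"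
    by (rule sum.reindex_bij_witness[where j = "\<lambda>a. a \<inter> X" and i = "\<lambda>S. S \<union> (b - X)"])
       (use X b recombine in auto)
  finally show ?thesis .
qed

lemma app_supported_Wp:
  assumes X: "X \<subseteq> sites N" and b: "b \<subseteq> sites N"
    and A: "local_matrix N X M A"
  shows "app N M (Wp N q) b = complex_of_real (1 / sqrt (real (N choose q)))
           * (\<Sum>S | S \<subseteq> X \<and> card S + card (b - X) = q. A (b \<inter> X) S)"
proof -
  define c where "c = complex_of_real (1 / sqrt (real (N choose q)))"
  have "finite X" "finite (b - X)"
    using X b finite_sites finite_subset by blast+
  then have "card (S \<union> (b - X)) = card S + card (b - X)" if "S \<subseteq> X" for S
    using that by (intro card_Un_disjoint) (auto intro: finite_subset)
  then have "Wp N q (S \<union> (b - X)) = (if card S + card (b - X) = q then c else 0)"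
    if "S \<subseteq> X" for S
    using that X b by (auto simp: Wp_def c_def)
  then have "app N M (Wp N q) b = (\<Sum>S\<in>Pow X. if card S + card (b - X) = q then c * A (b \<inter> X) S else 0)"
    unfolding app_supported[OF X b A] by (intro sum.cong) auto
  also have "\<dots> = c * (\<Sum>S | S \<subseteq> X \<and> card S + card (b - X) = q. A (b \<inter> X) S)"
    using \<open>finite X\<close> by (simp add: sum.inter_filter[symmetric] sum_distrib_left Pow_def)
  finally show ?thesis
    unfolding c_def .
qed

lemma app_zero_state: "app N M zero_state b = M b {}"
  unfolding app_def zero_state_def by (simp add: finite_sites if_distrib cong: if_cong)

lemma app_Wp_eq_0_if_card_Int_le_1:
  assumes X: "X \<subseteq> sites N" and supp: "supported_in N X M"
    and W: "state_eq N (app N M (Wp N 1)) (\<lambda>_. 0)"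
    and vac: "state_eq N (app N M zero_state) (\<lambda>_. 0)"
    and b: "b \<subseteq> sites N" and meets: "card (b \<inter> X) \<le> 1"
  shows "app N M (Wp N (card b)) b = 0"
proof -
  obtain A where A: "local_matrix N X M A"
    using supp by (auto simp: supported_in_iff_local_matrix)
  have "finite X" "finite b"
    using X b finite_sites finite_subset by blast+
  then have "card b = card (b \<inter> X) + card (b - X)"
    by (simp add: card_Int_Diff)
  then have app_b: "app N M (Wp N (card b)) b = complex_of_real (1 / sqrt (real (N choose card b)))
      * (\<Sum>S | S \<subseteq> X \<and> card S = card (b \<inter> X). A (b \<inter> X) S)"
    using app_supported_Wp[OF X b A, of "card b"] by simp
  from meets \<open>finite b\<close> consider "b \<inter> X = {}" | t where "b \<inter> X = {t}"
    by (metis card_0_eq card_1_singletonE finite_Int le_Suc_eq le_zero_eq One_nat_def)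
  then show ?thesis
  proof cases
    case 1
    have "{S. S \<subseteq> X \<and> card S = 0} = {{}}"
      using \<open>finite X\<close> by (auto dest: finite_subset)
    moreover have "A {} {} = 0"
      using vac A by (force simp: state_eq_def app_zero_state local_matrix_def)
    ultimately show ?thesis
      by (simp add: app_b 1)
  next
    case (2 t)
    then have "t \<in> sites N" "{t} \<subseteq> X" "{t} \<subseteq> sites N"
      using b by auto
    then have "N \<noteq> 0"
      by (auto simp: sites_def)
    have "app N M (Wp N 1) {t} = complex_of_real (1 / sqrt (real N))
        * (\<Sum>S | S \<subseteq> X \<and> card S = 1. A {t} S)"
      using app_supported_Wp[OF X \<open>{t} \<subseteq> sites N\<close> A, of 1] \<open>{t} \<subseteq> X\<close>
      by (simp add: Int_absorb2)
    then have "(\<Sum>S | S \<subseteq> X \<and> card S = 1. A {t} S) = 0"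
      using W \<open>{t} \<subseteq> sites N\<close> \<open>N \<noteq> 0\<close> by (simp add: state_eq_def)
    then show ?thesis
      by (simp add: app_b 2)
  qed
qed

lemma finite_regions: "finite (regions N R)"
  by (rule finite_subset[of _ "Pow (sites N)"]) (auto simp: regions_def finite_sites)

lemma regions_dist_less:
  assumes "X \<in> regions N R" "i \<in> X" "j \<in> X"
  shows "nat \<bar>int i - int j\<bar> < R"
proof -
  have "finite X"
    using assms(1) finite_sites finite_subset by (auto simp: regions_def)
  then have "nat \<bar>int i - int j\<bar> \<le> Max {nat \<bar>int i - int j\<bar> | i j. i \<in> X \<and> j \<in> X}"
    using assms(2,3) by (intro Max_ge) (auto intro: finite_image_set2)
  then show ?thesis
    using assms(1) by (auto simp: regions_def diam_def)
qed

lemma card_Int_region_le_1: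
  assumes "X \<in> regions N R" "finite B"
    and sep: "\<And>x y. x \<in> B \<Longrightarrow> y \<in> B \<Longrightarrow> x \<noteq> y \<Longrightarrow> R \<le> nat \<bar>int x - int y\<bar>"
  shows "card (B \<inter> X) \<le> 1"
proof -
  have "\<forall>x\<in>B \<inter> X. \<forall>y\<in>B \<inter> X. x = y"
    using regions_dist_less[OF assms(1)] sep by (meson IntD1 IntD2 not_le)
  then show ?thesis
    using \<open>finite B\<close> by (simp add: card_le_Suc0_iff_eq)
qed

lemma exists_spaced_sites:
  assumes "R > 0" "p * R \<le> N"
  shows "\<exists>B \<subseteq> sites N. card B = p \<and>
           (\<forall>x\<in>B. \<forall>y\<in>B. x \<noteq> y \<longrightarrow> R \<le> nat \<bar>int x - int y\<bar>)"
proof (intro exI conjI ballI impI)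
  let ?site = "\<lambda>k. 1 + k * R"
  show "?site ` {..<p} \<subseteq> sites N"
  proof
    fix x assume "x \<in> ?site ` {..<p}"
    then obtain k where "k < p" "x = ?site k" by blast
    moreover have "Suc k * R \<le> p * R"
      using \<open>k < p\<close> by (intro mult_le_mono1) simp
    ultimately show "x \<in> sites N"
      using assms by (auto simp: sites_def)
  qed
  show "card (?site ` {..<p}) = p"
    using \<open>R > 0\<close> by (simp add: card_image inj_on_def)
  fix x y assume "x \<in> ?site ` {..<p}" "y \<in> ?site ` {..<p}" "x \<noteq> y"
  then obtain k l where "x = ?site k" "y = ?site l" "k \<noteq> l" by blast
  then have "\<bar>int x - int y\<bar> = \<bar>int k - int l\<bar> * int R"
    by (simp add: abs_mult left_diff_distrib[symmetric])
  moreover have "\<bar>int k - int l\<bar> \<ge> 1"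
    using \<open>k \<noteq> l\<close> by linarith
  ultimately have "int R \<le> \<bar>int x - int y\<bar>"
    using mult_right_mono[of 1 "\<bar>int k - int l\<bar>" "int R"] by simp
  then show "R \<le> nat \<bar>int x - int y\<bar>"
    by (simp add: le_nat_iff)
qed

theorem proposition2:
  fixes N R p :: nat and h :: "nat set \<Rightarrow> oper" and E :: complex
  assumes "R > 0"
    and "\<And>X. X \<in> regions N R \<Longrightarrow> supported_in N X (h X)"
    and "\<And>X. X \<in> regions N R \<Longrightarrow> state_eq N (app N (h X) (Wp N 1)) (\<lambda>_. 0)"
    and "\<And>X. X \<in> regions N R \<Longrightarrow> state_eq N (app N (h X) zero_state) (\<lambda>_. 0)"
    and "p \<le> N" and "real p \<le> real N / real R"
    and "state_eq N (app N (\<lambda>b a. \<Sum>X\<in>regions N R. h X b a) (Wp N p)) (\<lambda>b. E * Wp N p b)"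
  shows "E = 0"
proof -
  have "real (p * R) \<le> real N"
    using assms(1,6) by (simp add: field_simps)
  then obtain B where B: "B \<subseteq> sites N" "card B = p"
    and sep: "\<forall>x\<in>B. \<forall>y\<in>B. x \<noteq> y \<longrightarrow> R \<le> nat \<bar>int x - int y\<bar>"
    using exists_spaced_sites[OF assms(1)] by (metis of_nat_le_iff)
  have "finite B"
    using B(1) finite_sites finite_subset by blast
  have "app N (h X) (Wp N p) B = 0" if "X \<in> regions N R" for X
    using app_Wp_eq_0_if_card_Int_le_1[OF _ assms(2-4)[OF that] B(1)]
      card_Int_region_le_1[OF that \<open>finite B\<close>] sep that B(2)
    by (auto simp: regions_def)
  then have "app N (\<lambda>b a. \<Sum>X\<in>regions N R. h X b a) (Wp N p) B = 0"
    by (simp add: app_sum_oper finite_regions)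
  moreover have "app N (\<lambda>b a. \<Sum>X\<in>regions N R. h X b a) (Wp N p) B = E * Wp N p B"
    using assms(7) B(1) by (simp add: state_eq_def)
  moreover have "Wp N p B \<noteq> 0"
    using B assms(5) by (simp add: Wp_def)
  ultimately show ?thesis
    by simp
qed

end
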